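(* Let $s,q\in\mathbb N$ and $\epsilon\in(0,1)$. Let $\xi$ be a detailing of a distribution $\mu$ over $\{0,1\}^n$ with respect to a finite set $A$, with weight distribution $\eta$ and type distribution $\Lambda$, and let $\widetilde\eta$ be a distribution over $A$ and $\widetilde\Lambda$ a finitely supported distribution over $[0,1]^A$ with $d^\eta_{EM}(\Lambda,\widetilde\Lambda)\le\epsilon/(3sq)$ and $d_{TV}(\eta,\widetilde\eta)\le\epsilon/(3s)$. If $n\ge18q^2(s+1)/\epsilon$ and $\xi$ is $\left(\frac{\epsilon}{9(s+1)},q\right)$-good, then $d_{TV}(\mathcal{D}_{sim}(\widetilde\eta,\widetilde\Lambda),\mathcal{D}^{s,q}_{test}(\mu))\le\epsilon$. Consequently, for every function $\alpha:\{0,1\}^{s\times q}\to[0,1]$, $\left|\mathbb{E}_{M\sim\mathcal{D}_{sim}(\widetilde\eta,\widetilde\Lambda)}[\alpha(M)]-\mathbb{E}_{M\sim\mathcal{D}^{s,q}_{test}(\mu)}[\alpha(M)]\right|\le\epsilon$.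
   Context: A detailing of $\mu$ with respect to a finite set $A$ is a distribution $\xi$ over $\{0,1\}^n\times A$ whose marginal on $\{0,1\}^n$ is $\mu$; its weight distribution is $\eta=\xi|_2$, and $\xi|_1^{2:a}$ is the conditional distribution of the first coordinate given second coordinate $a$. The type of $i\in[n]$ is $t_i\in[0,1]^A$, $t_i(a)=\Pr_{x\sim\xi|_1^{2:a}}[x_i=1]$ if $\eta(a)>0$ and $0$ otherwise; the type distribution $\Lambda$ is the law of $t_{\mathbf i}$ for $\mathbf i$ uniform in $[n]$. A $q$-tuple $(j_1,\dots,j_q)$ of distinct indices is $\epsilon$-independent w.r.t. a distribution $\nu$ over $\{0,1\}^n$ if $d_{TV}(\nu|_{\{j_1,\dots,j_q\}},\prod_\ell\nu|_{j_\ell})\le\epsilon$; $\nu$ is $(\epsilon,q)$-good if at least a $1-\epsilon$ fraction of the $q$-tuples of distinct indices are $\epsilon$-independent; $\xi$ is $(\epsilon,q)$-good if some $J\subseteq A$ with $\eta(J)\ge1-\epsilon$ has $\xi|_1^{2:a}$ $(\epsilon,q)$-good for all $a\in J$. For $x,y\in[0,1]^A$, $d^\eta_{\ell_1}(x,y)=\sum_a\eta(a)|x_a-y_a|$ and $d^\eta_{EM}$ is the Earth Mover distance w.r.t. it. $\mathcal{D}_{sim}(\eta,\Lambda)$: draw $t_1..t_q\sim\Lambda$, $a_1..a_s\sim\eta$ independently, then $M_{i,j}\sim\mathrm{Ber}(t_j(a_i))$ independently. $\mathcal{D}^{s,q}_{test}(\mu)$: draw $x^1..x^s\sim\mu$ and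 $j_1..j_q$ uniform in $[n]$ independently, and output $M_{i,k}=x^i_{j_k}$. *)

theory Defs
  imports "HOL-Probability.Probability"
begin

text \<open>Vectors in {0,1}^n are functions nat => bool (coordinates 0..n-1);
  s x q matrices are functions nat * nat => bool, False outside {..<s} x {..<q}.
  The finite set A is a finite type 'a.\<close>

definition tv_dist :: "'b pmf \<Rightarrow> 'b pmf \<Rightarrow> real" where
  "tv_dist p r = (SUP S. \<bar>measure_pmf.prob p S - measure_pmf.prob r S\<bar>)"

definition is_detailing :: "nat \<Rightarrow> (nat \<Rightarrow> bool) pmf \<Rightarrow> ((nat \<Rightarrow> bool) \<times> 'a) pmf \<Rightarrow> bool" where
  "is_detailing n \<mu> \<xi> \<longleftrightarrow> map_pmf fst \<xi> = \<mu> \<and> set_pmf \<mu> \<subseteq> {x. \<forall>i\<ge>n. \<not> x i}"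

definition weight_dist :: "((nat \<Rightarrow> bool) \<times> 'a) pmf \<Rightarrow> 'a pmf" where
  "weight_dist \<xi> = map_pmf snd \<xi>"

definition cond1 :: "((nat \<Rightarrow> bool) \<times> 'a) pmf \<Rightarrow> 'a \<Rightarrow> (nat \<Rightarrow> bool) pmf" where
  "cond1 \<xi> a = map_pmf fst (cond_pmf \<xi> {p. snd p = a})"

definition type_of :: "((nat \<Rightarrow> bool) \<times> 'a) pmf \<Rightarrow> nat \<Rightarrow> 'a \<Rightarrow> real" where
  "type_of \<xi> i = (\<lambda>a. if pmf (weight_dist \<xi>) a > 0
       then measure_pmf.prob (cond1 \<xi> a) {x. x i} else 0)"

definition type_dist :: "nat \<Rightarrow> ((nat \<Rightarrow> bool) \<times> 'a) pmf \<Rightarrow> ('a \<Rightarrow> real) pmf" where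
  "type_dist n \<xi> = map_pmf (type_of \<xi>) (pmf_of_set {..<n})"

definition distinct_tuples :: "nat \<Rightarrow> nat \<Rightarrow> (nat \<Rightarrow> nat) set" where
  "distinct_tuples n q = {j. (\<forall>l<q. j l < n) \<and> inj_on j {..<q} \<and> (\<forall>l\<ge>q. j l = 0)}"

definition eps_independent :: "real \<Rightarrow> nat \<Rightarrow> (nat \<Rightarrow> bool) pmf \<Rightarrow> (nat \<Rightarrow> nat) \<Rightarrow> bool" where
  "eps_independent \<epsilon> q \<nu> j \<longleftrightarrow>
     tv_dist (map_pmf (\<lambda>x l. if l < q then x (j l) else False) \<nu>)
             (Pi_pmf {..<q} False (\<lambda>l. map_pmf (\<lambda>x. x (j l)) \<nu>)) \<le> \<epsilon>"

definition good_dist :: "nat \<Rightarrow> real \<Rightarrow> nat \<Rightarrow> (nat \<Rightarrow> bool) pmf \<Rightarrow> bool" where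
  "good_dist n \<epsilon> q \<nu> \<longleftrightarrow>
     real (card {j \<in> distinct_tuples n q. eps_independent \<epsilon> q \<nu> j})
       \<ge> (1 - \<epsilon>) * real (card (distinct_tuples n q))"

definition good_detailing :: "nat \<Rightarrow> real \<Rightarrow> nat \<Rightarrow> ((nat \<Rightarrow> bool) \<times> 'a) pmf \<Rightarrow> bool" where
  "good_detailing n \<epsilon> q \<xi> \<longleftrightarrow>
     (\<exists>J. J \<subseteq> set_pmf (weight_dist \<xi>) \<and> measure_pmf.prob (weight_dist \<xi>) J \<ge> 1 - \<epsilon>
          \<and> (\<forall>a\<in>J. good_dist n \<epsilon> q (cond1 \<xi> a)))"

definition d_l1 :: "'a::finite pmf \<Rightarrow> ('a \<Rightarrow> real) \<Rightarrow> ('a \<Rightarrow> real) \<Rightarrow> real" where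
  "d_l1 \<eta> x y = (\<Sum>a\<in>UNIV. pmf \<eta> a * \<bar>x a - y a\<bar>)"

definition couplings :: "'b pmf \<Rightarrow> 'c pmf \<Rightarrow> ('b \<times> 'c) pmf set" where
  "couplings p r = {\<pi>. map_pmf fst \<pi> = p \<and> map_pmf snd \<pi> = r}"

definition d_EM :: "'a::finite pmf \<Rightarrow> ('a \<Rightarrow> real) pmf \<Rightarrow> ('a \<Rightarrow> real) pmf \<Rightarrow> real" where
  "d_EM \<eta> \<Lambda> \<Lambda>' = (INF \<pi>\<in>couplings \<Lambda> \<Lambda>'. measure_pmf.expectation \<pi> (\<lambda>(x, y). d_l1 \<eta> x y))"

definition D_sim :: "nat \<Rightarrow> nat \<Rightarrow> 'a pmf \<Rightarrow> ('a \<Rightarrow> real) pmf \<Rightarrow> (nat \<times> nat \<Rightarrow> bool) pmf" where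
  "D_sim s q \<eta> \<Lambda> = do {
     t \<leftarrow> Pi_pmf {..<q} undefined (\<lambda>_. \<Lambda>);
     a \<leftarrow> Pi_pmf {..<s} undefined (\<lambda>_. \<eta>);
     Pi_pmf ({..<s} \<times> {..<q}) False (\<lambda>(i, j). bernoulli_pmf (t j (a i)))
   }"

definition D_test :: "nat \<Rightarrow> nat \<Rightarrow> nat \<Rightarrow> (nat \<Rightarrow> bool) pmf \<Rightarrow> (nat \<times> nat \<Rightarrow> bool) pmf" where
  "D_test n s q \<mu> = do {
     xs \<leftarrow> Pi_pmf {..<s} undefined (\<lambda>_. \<mu>);
     js \<leftarrow> Pi_pmf {..<q} undefined (\<lambda>_. pmf_of_set {..<n});
     return_pmf (\<lambda>(i, k). if i < s \<and> k < q then xs i (js k) else False)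
   }"

end

theory Submission
  imports Defs
begin

text \<open>By the triangle inequality the distance splits into three parts. Replacing eta' by eta
  only changes the s independently drawn row weights, at cost s * d_TV(eta, eta'). Along any
  coupling of Lambda and Lambda', each of the s * q Bernoulli entries moves by at most the
  eta-weighted l1-distance of the coupled types, which gives s * q * d_EM(Lambda, Lambda').
  Finally, given the row weights a_i and the column indices j_k, D_test(mu) draws each row from
  the conditional distribution for a_i restricted to the columns, whereas D_sim(eta, Lambda)
  draws the product of its marginals. A row therefore costs at most e = epsilon / (9 (s + 1))
  when its weight is good and the tuple is distinct and e-independent, and at most 1 otherwise.
  Colliding tuples have probability at most q^2 / n, bad weights at most e and bad distinct
  tuples at most e, which gives q^2 / n + 3 s e.\<close>

abbreviation Pr :: "'b pmf \<Rightarrow> 'b set \<Rightarrow> real" where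
  "Pr p S \<equiv> measure_pmf.prob p S"

abbreviation Ep :: "'b pmf \<Rightarrow> ('b \<Rightarrow> real) \<Rightarrow> real" where
  "Ep p f \<equiv> measure_pmf.expectation p f"

lemma integrable_measure_pmf_bounded:
  fixes f :: "'b \<Rightarrow> real"
  shows "(\<And>x. \<bar>f x\<bar> \<le> B) \<Longrightarrow> integrable (measure_pmf M) f"
  by (intro measure_pmf.integrable_const_bound[where B = B]) auto

lemma measure_bind_pmf: "Pr (bind_pmf M N) X = Ep M (\<lambda>x. Pr (N x) X)"
proof -
  have "ennreal (Pr (bind_pmf M N) X) = (\<integral>\<^sup>+x. ennreal (Pr (N x) X) \<partial>M)"
    by (simp add: measure_pmf.emeasure_eq_measure[symmetric])
  also have "\<dots> = ennreal (Ep M (\<lambda>x. Pr (N x) X))"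
    by (intro nn_integral_eq_integral integrable_measure_pmf_bounded[where B = 1]) auto
  finally show ?thesis by (simp add: integral_nonneg_AE)
qed

subsection \<open>Total variation distance\<close>

lemma abs_prob_diff_le_1: "\<bar>Pr p S - Pr r S\<bar> \<le> 1"
  using measure_pmf.prob_le_1[of p S] measure_pmf.prob_le_1[of r S]
    measure_nonneg[of p S] measure_nonneg[of r S] by linarith

lemma prob_diff_le_tv_dist: "\<bar>Pr p S - Pr r S\<bar> \<le> tv_dist p r"
  unfolding tv_dist_def
  by (rule cSUP_upper) (auto intro: bdd_aboveI[where M = 1] abs_prob_diff_le_1)

lemma tv_dist_le: "(\<And>S. \<bar>Pr p S - Pr r S\<bar> \<le> c) \<Longrightarrow> tv_dist p r \<le> c"
  unfolding tv_dist_def by (rule cSUP_least) auto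

lemma tv_dist_nonneg: "0 \<le> tv_dist p r"
  using prob_diff_le_tv_dist[of p "{}" r] by simp

lemma tv_dist_le_1: "tv_dist p r \<le> 1"
  by (intro tv_dist_le abs_prob_diff_le_1)

lemma tv_dist_self: "tv_dist p p = 0"
  using tv_dist_le[of p p 0] tv_dist_nonneg[of p p] by simp

lemma tv_dist_commute: "tv_dist p r = tv_dist r p"
  unfolding tv_dist_def by (simp add: abs_minus_commute)

lemma tv_dist_triangle: "tv_dist p r \<le> tv_dist p m + tv_dist m r"
proof (rule tv_dist_le)
  fix S
  have "\<bar>Pr p S - Pr r S\<bar> \<le> \<bar>Pr p S - Pr m S\<bar> + \<bar>Pr m S - Pr r S\<bar>" by linarith
  also have "\<dots> \<le> tv_dist p m + tv_dist m r" by (intro add_mono prob_diff_le_tv_dist)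
  finally show "\<bar>Pr p S - Pr r S\<bar> \<le> tv_dist p m + tv_dist m r" .
qed

lemma tv_dist_map_pmf: "tv_dist (map_pmf f p) (map_pmf f r) \<le> tv_dist p r"
  by (rule tv_dist_le) (simp add: prob_diff_le_tv_dist)

lemma expectation_diff_le_prob_diff:
  fixes g :: "'b \<Rightarrow> real"
  assumes "\<And>x. 0 \<le> g x" "\<And>x. g x \<le> 1"
  shows "Ep p g - Ep r g \<le> Pr p {x. pmf r x < pmf p x} - Pr r {x. pmf r x < pmf p x}"
proof -
  let ?S = "{x. pmf r x < pmf p x}" and ?f = "\<lambda>x. (pmf p x - pmf r x) * g x"
  have weighted: "Infinite_Set_Sum.abs_summable_on (\<lambda>x. pmf M x * g x) A" for M A
    by (rule abs_summable_on_comparison_test'[OF pmf_abs_summable])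
      (use assms in \<open>auto simp: abs_mult intro!: mult_left_le\<close>)
  have summable: "Infinite_Set_Sum.abs_summable_on ?f A" for A
    unfolding left_diff_distrib by (intro abs_summable_on_diff weighted)
  have "Ep p g - Ep r g = infsetsum ?f UNIV"
    by (simp add: pmf_expectation_eq_infsetsum left_diff_distrib infsetsum_diff[OF weighted weighted])
  also have "\<dots> \<le> infsetsum ?f ?S"
    by (rule infsetsum_mono_neutral_right[OF summable summable])
      (use assms in \<open>auto simp: mult_le_0_iff\<close>)
  also have "\<dots> \<le> infsetsum (\<lambda>x. pmf p x - pmf r x) ?S"
    by (rule infsetsum_mono[OF summable]) (use assms in \<open>auto intro: mult_left_le\<close>)
  also have "\<dots> = Pr p ?S - Pr r ?S"
    by (simp add: measure_pmf_conv_infsetsum infsetsum_diff[OF pmf_abs_summable pmf_abs_summable])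
  finally show ?thesis .
qed

lemma abs_expectation_diff_le_tv_dist:
  fixes g :: "'b \<Rightarrow> real"
  assumes "\<And>x. 0 \<le> g x" "\<And>x. g x \<le> 1"
  shows "\<bar>Ep p g - Ep r g\<bar> \<le> tv_dist p r"
proof -
  have one_sided: "Ep p g - Ep r g \<le> tv_dist p r" for p r :: "'b pmf"
    using expectation_diff_le_prob_diff[where g = g and p = p and r = r, OF assms]
    by (rule order.trans[OF _ order.trans[OF abs_ge_self prob_diff_le_tv_dist]])
  show ?thesis
    unfolding abs_le_iff using one_sided[of p r] one_sided[of r p] tv_dist_commute[of r p] by linarith
qed

lemma tv_dist_bind_pmf_left: "tv_dist (bind_pmf p f) (bind_pmf r f) \<le> tv_dist p r"
  by (rule tv_dist_le) (simp add: measure_bind_pmf abs_expectation_diff_le_tv_dist)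

lemma tv_dist_bind_pmf_right:
  assumes "\<And>x. x \<in> set_pmf p \<Longrightarrow> tv_dist (f x) (g x) \<le> B x" and "integrable (measure_pmf p) B"
  shows "tv_dist (bind_pmf p f) (bind_pmf p g) \<le> Ep p B"
proof (rule tv_dist_le)
  fix S
  have "\<bar>Pr (bind_pmf p f) S - Pr (bind_pmf p g) S\<bar> = \<bar>Ep p (\<lambda>x. Pr (f x) S - Pr (g x) S)\<bar>"
    by (simp add: measure_bind_pmf integrable_measure_pmf_bounded[where B = 1])
  also have "\<dots> \<le> Ep p (\<lambda>x. \<bar>Pr (f x) S - Pr (g x) S\<bar>)"
    by (rule integral_abs_bound)
  also have "\<dots> \<le> Ep p B"
    using assms by (intro integral_mono_AE[OF integrable_measure_pmf_bounded[where B = 1]])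
      (auto simp: AE_measure_pmf_iff abs_prob_diff_le_1 intro: order.trans[OF prob_diff_le_tv_dist])
  finally show "\<bar>Pr (bind_pmf p f) S - Pr (bind_pmf p g) S\<bar> \<le> Ep p B" .
qed

lemma tv_dist_bind_pmf_right_const:
  "(\<And>x. x \<in> set_pmf p \<Longrightarrow> tv_dist (f x) (g x) \<le> c) \<Longrightarrow> tv_dist (bind_pmf p f) (bind_pmf p g) \<le> c"
  using tv_dist_bind_pmf_right[of p f g "\<lambda>_. c"] by simp

lemma pair_pmf_conv_bind_pmf: "pair_pmf p q = bind_pmf p (\<lambda>x. map_pmf (Pair x) q)"
  by (simp add: pair_pmf_def map_pmf_def o_def)

lemma tv_dist_pair_pmf:
  "tv_dist (pair_pmf p1 p2) (pair_pmf r1 r2) \<le> tv_dist p1 r1 + tv_dist p2 r2"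
proof -
  have "tv_dist (pair_pmf p1 p2) (pair_pmf r1 p2) \<le> tv_dist p1 r1"
    unfolding pair_pmf_conv_bind_pmf by (rule tv_dist_bind_pmf_left)
  moreover have "tv_dist (pair_pmf r1 p2) (pair_pmf r1 r2) \<le> tv_dist p2 r2"
    unfolding pair_pmf_conv_bind_pmf by (intro tv_dist_bind_pmf_right_const tv_dist_map_pmf)
  ultimately show ?thesis
    using tv_dist_triangle[of "pair_pmf p1 p2" "pair_pmf r1 r2" "pair_pmf r1 p2"] by linarith
qed

lemma tv_dist_Pi_pmf:
  assumes "finite I"
  shows "tv_dist (Pi_pmf I d P) (Pi_pmf I d Q) \<le> (\<Sum>i\<in>I. tv_dist (P i) (Q i))"
  using assms
proof (induction rule: finite_induct)
  case empty
  then show ?case by (simp add: tv_dist_self)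
next
  case (insert x F)
  have "tv_dist (Pi_pmf (insert x F) d P) (Pi_pmf (insert x F) d Q)
     \<le> tv_dist (pair_pmf (P x) (Pi_pmf F d P)) (pair_pmf (Q x) (Pi_pmf F d Q))"
    using insert by (simp add: Pi_pmf_insert tv_dist_map_pmf)
  also have "\<dots> \<le> tv_dist (P x) (Q x) + tv_dist (Pi_pmf F d P) (Pi_pmf F d Q)"
    by (rule tv_dist_pair_pmf)
  finally show ?case using insert by simp
qed

context
begin

interpretation pmf_as_function .

lemma pmf_bernoulli_pmf_True_clamped: "pmf (bernoulli_pmf p) True = min 1 (max 0 p)"
  by transfer simp

end

lemma tv_dist_bernoulli_pmf: "tv_dist (bernoulli_pmf a) (bernoulli_pmf b) \<le> \<bar>a - b\<bar>"
proof (rule tv_dist_le)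
  fix S :: "bool set"
  have "S = {} \<or> S = {True} \<or> S = {False} \<or> S = UNIV"
    by (cases "True \<in> S"; cases "False \<in> S") (auto simp: UNIV_bool; metis (full_types))+
  moreover have "\<bar>min 1 (max 0 a) - min 1 (max 0 b)\<bar> \<le> \<bar>a - b\<bar>" by linarith
  ultimately show "\<bar>Pr (bernoulli_pmf a) S - Pr (bernoulli_pmf b) S\<bar> \<le> \<bar>a - b\<bar>"
    by (auto simp: measure_pmf_single pmf_False_conv_True pmf_bernoulli_pmf_True_clamped)
qed

lemma bernoulli_pmf_prob_True: "p = bernoulli_pmf (Pr p {True})"
proof (rule pmf_eqI)
  fix x :: bool
  have "0 \<le> Pr p {True}" "Pr p {True} \<le> 1" by auto
  then show "pmf p x = pmf (bernoulli_pmf (Pr p {True})) x"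
    by (cases x) (auto simp: measure_pmf_single pmf_False_conv_True)
qed

subsection \<open>Product distributions\<close>

lemma finite_set_Pi_pmf:
  "finite I \<Longrightarrow> (\<And>i. i \<in> I \<Longrightarrow> finite (set_pmf (P i))) \<Longrightarrow> finite (set_pmf (Pi_pmf I d P))"
  by (subst set_Pi_pmf) auto

lemma expectation_Pi_pmf_component:
  assumes "finite I" "i \<in> I"
  shows "Ep (Pi_pmf I d P) (\<lambda>x. F (x i)) = Ep (P i) F"
proof -
  have "Ep (Pi_pmf I d P) (\<lambda>x. F (x i)) = Ep (map_pmf (\<lambda>x. x i) (Pi_pmf I d P)) F" by simp
  also have "map_pmf (\<lambda>x. x i) (Pi_pmf I d P) = P i" using assms by (simp add: Pi_pmf_component)
  finally show ?thesis .
qed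

lemma Pi_pmf_Times:
  assumes A: "finite A" and B: "finite B"
  shows "Pi_pmf (A \<times> B) d (\<lambda>(i, j). P i j)
       = map_pmf (\<lambda>R (i, j). if i \<in> A \<and> j \<in> B then R i j else d) (Pi_pmf A dd (\<lambda>i. Pi_pmf B d (P i)))"
    (is "?L = map_pmf ?flat ?Q")
proof (rule pmf_eqI)
  fix g :: "'a \<times> 'b \<Rightarrow> 'c"
  define R0 where "R0 = (\<lambda>i. if i \<in> A then (\<lambda>j. if j \<in> B then g (i, j) else d) else dd)"
  \<comment> \<open>on the support of the nested product, currying undoes the flattening\<close>
  have flat_inj: "R = R0" if R: "R \<in> set_pmf ?Q" and "?flat R = g" for R
  proof
    fix i
    show "R i = R0 i"
    proof (cases "i \<in> A")
      case True
      then have "R i \<in> set_pmf (Pi_pmf B d (P i))"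
        using R unfolding set_Pi_pmf[OF A] PiE_dflt_def by auto
      then have "R i j = d" if "j \<notin> B" for j
        using subsetD[OF set_Pi_pmf_subset[OF B]] that by fastforce
      then show ?thesis
        using True \<open>?flat R = g\<close> by (auto simp: R0_def fun_eq_iff split: if_splits)
    next
      case False
      then show ?thesis
        using subsetD[OF set_Pi_pmf_subset[OF A] R] by (simp add: R0_def)
    qed
  qed
  show "pmf ?L g = pmf (map_pmf ?flat ?Q) g"
  proof (cases "\<forall>z. z \<notin> A \<times> B \<longrightarrow> g z = d")
    case False
    then obtain z where "z \<notin> A \<times> B" "g z \<noteq> d" by blast
    then have "?flat R z \<noteq> g z" for R by (cases z) auto
    then have "?flat -` {g} = {}" by blast
    moreover have "pmf ?L g = 0"
      using False A B by (intro pmf_Pi_outside) auto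
    ultimately show ?thesis by (simp add: pmf_map)
  next
    case True
    then have "?flat R0 = g"
      by (auto simp: R0_def fun_eq_iff)
    have "pmf (map_pmf ?flat ?Q) g = Pr ?Q (?flat -` {g} \<inter> set_pmf ?Q)"
      by (simp add: pmf_map measure_Int_set_pmf)
    also have "\<dots> = Pr ?Q ({R0} \<inter> set_pmf ?Q)"
      using flat_inj \<open>?flat R0 = g\<close> by (intro arg_cong[where f = "Pr ?Q"]) blast
    also have "\<dots> = pmf ?Q R0"
      by (simp add: measure_Int_set_pmf measure_pmf_single)
    also have "\<dots> = (\<Prod>i\<in>A. \<Prod>j\<in>B. pmf (P i j) (g (i, j)))"
      using A B by (simp add: pmf_Pi' R0_def cong: prod.cong)
    also have "\<dots> = (\<Prod>z\<in>A \<times> B. pmf ((\<lambda>(i, j). P i j) z) (g z))"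
      by (simp add: prod.cartesian_product case_prod_beta)
    also have "\<dots> = pmf ?L g"
      using A B True by (intro pmf_Pi'[symmetric]) auto
    finally show ?thesis ..
  qed
qed

subsection \<open>Uniformly random index tuples\<close>

definition uniform_tuples :: "nat \<Rightarrow> nat \<Rightarrow> (nat \<Rightarrow> nat) pmf" where
  "uniform_tuples n q = Pi_pmf {..<q} 0 (\<lambda>_. pmf_of_set {..<n})"

lemma set_pmf_uniform_tuples:
  "n > 0 \<Longrightarrow> set_pmf (uniform_tuples n q) = PiE_dflt {..<q} 0 (\<lambda>_. {..<n})"
  unfolding uniform_tuples_def by (simp add: set_Pi_pmf o_def lessThan_empty_iff)

lemma uniform_tuples_eq_pmf_of_set:
  "n > 0 \<Longrightarrow> uniform_tuples n q = pmf_of_set (PiE_dflt {..<q} 0 (\<lambda>_. {..<n}))"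
  unfolding uniform_tuples_def by (intro Pi_pmf_of_set) auto

lemma prob_uniform_tuples_coincide_le:
  assumes "n > 0" "l < q" "l' < q" "l \<noteq> l'"
  shows "Pr (uniform_tuples n q) {f. f l = f l'} \<le> 1 / real n"
proof -
  define U where "U = pmf_of_set {..<n}"
  define R where "R = Pi_pmf ({..<q} - {l}) (0::nat) (\<lambda>_. U)"
  have "uniform_tuples n q = Pi_pmf (insert l ({..<q} - {l})) 0 (\<lambda>_. U)"
    unfolding uniform_tuples_def U_def using assms by (simp add: insert_absorb)
  also have "\<dots> = map_pmf (\<lambda>(y, f). f(l := y)) (pair_pmf U R)"
    unfolding R_def by (rule Pi_pmf_insert) auto
  finally have "Pr (uniform_tuples n q) {f. f l = f l'} = Pr (pair_pmf U R) {(y, f). y = f l'}"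
    using assms by (auto intro!: arg_cong[where f = "Pr _"])
  also have "\<dots> = Ep U (\<lambda>y. Pr R {f. f l' = y})"
    by (simp add: pair_pmf_conv_bind_pmf measure_bind_pmf vimage_def eq_commute)
  also have "\<dots> \<le> Ep U (\<lambda>y. 1 / real n)"
  proof (rule integral_mono[OF integrable_measure_pmf_bounded[where B = 1] measure_pmf.integrable_const])
    fix y
    have "map_pmf (\<lambda>f. f l') R = U"
      unfolding R_def using assms by (simp add: Pi_pmf_component)
    then have "Pr R {f. f l' = y} = Pr U {y}"
      by (auto simp: vimage_def)
    also have "\<dots> = real (card ({..<n} \<inter> {y})) / real n"
      using assms unfolding U_def by (subst measure_pmf_of_set) auto
    also have "\<dots> \<le> 1 / real n"
      using card_mono[of "{y}" "{..<n} \<inter> {y}"] by (intro divide_right_mono) auto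
    finally show "Pr R {f. f l' = y} \<le> 1 / real n" .
  qed auto
  finally show ?thesis by simp
qed

lemma prob_uniform_tuples_not_inj_le:
  assumes "n > 0"
  shows "Pr (uniform_tuples n q) {f. \<not> inj_on f {..<q}} \<le> real q ^ 2 / real n"
proof -
  define L where "L = {(l, l'). l < q \<and> l' < q \<and> l \<noteq> l'}"
  have L: "L \<subseteq> {..<q} \<times> {..<q}" unfolding L_def by auto
  then have "finite L" by (rule finite_subset) simp
  have "{f. \<not> inj_on f {..<q}} = (\<Union>(l, l')\<in>L. {f. f l = f l'})"
    unfolding L_def inj_on_def by auto
  then have "Pr (uniform_tuples n q) {f. \<not> inj_on f {..<q}}
      = Pr (uniform_tuples n q) (\<Union>(l, l')\<in>L. {f. f l = f l'})"
    by (rule arg_cong)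
  also have "\<dots> \<le> (\<Sum>(l, l')\<in>L. Pr (uniform_tuples n q) {f. f l = f l'})"
    using measure_pmf.finite_measure_subadditive_finite[OF \<open>finite L\<close>, of "\<lambda>(l, l'). {f. f l = f l'}"]
    by (simp add: case_prod_beta)
  also have "\<dots> \<le> (\<Sum>(l, l')\<in>L. 1 / real n)"
    using prob_uniform_tuples_coincide_le[OF assms] by (intro sum_mono) (auto simp: L_def)
  also have "\<dots> = real (card L) / real n" by simp
  also have "\<dots> \<le> real q ^ 2 / real n"
    using card_mono[OF _ L] by (intro divide_right_mono)
      (auto simp: card_cartesian_product power2_eq_square simp flip: of_nat_mult)
  finally show ?thesis .
qed

lemma prob_pmf_of_set_Diff_le:
  assumes "finite P" "P \<noteq> {}" "D \<subseteq> P" "G \<subseteq> D" "(1 - e) * real (card D) \<le> real (card G)" "0 \<le> e"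
  shows "Pr (pmf_of_set P) (D - G) \<le> e"
proof -
  have "finite D" using assms(1,3) by (rule finite_subset[rotated])
  then have "real (card (D - G)) \<le> e * real (card D)"
    using assms(4,5) card_mono[OF \<open>finite D\<close> assms(4)]
    by (simp add: card_Diff_subset finite_subset of_nat_diff algebra_simps)
  also have "\<dots> \<le> e * real (card P)"
    using assms(1,3,6) card_mono by (intro mult_left_mono) auto
  finally have "real (card (D - G)) / real (card P) \<le> e"
    using assms(1,2) by (simp add: divide_le_eq card_gt_0_iff)
  moreover have "P \<inter> (D - G) = D - G" using assms(3) by auto
  ultimately show ?thesis using assms(1,2) by (simp add: measure_pmf_of_set)
qed

subsection \<open>Perturbing the simulation distribution\<close>

lemma tv_dist_D_sim_weights:
  "tv_dist (D_sim s q \<eta>1 \<Lambda>) (D_sim s q \<eta>2 \<Lambda>) \<le> real s * tv_dist \<eta>1 \<eta>2"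
  unfolding D_sim_def
proof (intro tv_dist_bind_pmf_right_const order.trans[OF tv_dist_bind_pmf_left])
  show "tv_dist (Pi_pmf {..<s} undefined (\<lambda>_. \<eta>1)) (Pi_pmf {..<s} undefined (\<lambda>_. \<eta>2))
      \<le> real s * tv_dist \<eta>1 \<eta>2"
    using tv_dist_Pi_pmf[of "{..<s}" undefined "\<lambda>_. \<eta>1" "\<lambda>_. \<eta>2"] by simp
qed

lemma expectation_abs_diff_eq_d_l1: "Ep \<eta> (\<lambda>b. \<bar>x b - y b\<bar>) = d_l1 \<eta> x y"
  unfolding d_l1_def by (subst integral_measure_pmf_real[where A = UNIV]) (auto simp: mult.commute)

lemma tv_dist_bernoulli_matrices:
  fixes \<eta> :: "'a::finite pmf" and t t' :: "nat \<Rightarrow> 'a \<Rightarrow> real"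
  shows "tv_dist
      (Pi_pmf {..<s} undefined (\<lambda>_. \<eta>) \<bind> (\<lambda>a. Pi_pmf ({..<s} \<times> {..<q}) False (\<lambda>(i, j). bernoulli_pmf (t j (a i)))))
      (Pi_pmf {..<s} undefined (\<lambda>_. \<eta>) \<bind> (\<lambda>a. Pi_pmf ({..<s} \<times> {..<q}) False (\<lambda>(i, j). bernoulli_pmf (t' j (a i)))))
    \<le> real s * (\<Sum>j<q. d_l1 \<eta> (t j) (t' j))"
proof -
  define PA where "PA = Pi_pmf {..<s} undefined (\<lambda>_. \<eta>)"
  have finPA: "finite (set_pmf PA)" unfolding PA_def by (intro finite_set_Pi_pmf) auto
  have "tv_dist
      (PA \<bind> (\<lambda>a. Pi_pmf ({..<s} \<times> {..<q}) False (\<lambda>(i, j). bernoulli_pmf (t j (a i)))))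
      (PA \<bind> (\<lambda>a. Pi_pmf ({..<s} \<times> {..<q}) False (\<lambda>(i, j). bernoulli_pmf (t' j (a i)))))
    \<le> Ep PA (\<lambda>a. \<Sum>(i, j)\<in>{..<s} \<times> {..<q}. \<bar>t j (a i) - t' j (a i)\<bar>)"
    by (intro tv_dist_bind_pmf_right integrable_measure_pmf_finite[OF finPA]
        order.trans[OF tv_dist_Pi_pmf sum_mono]) (auto simp: tv_dist_bernoulli_pmf)
  also have "\<dots> = (\<Sum>(i, j)\<in>{..<s} \<times> {..<q}. d_l1 \<eta> (t j) (t' j))"
    unfolding PA_def
    by (auto simp: Bochner_Integration.integral_sum integrable_measure_pmf_finite finite_set_Pi_pmf
        expectation_Pi_pmf_component[where F = "\<lambda>b. \<bar>t _ b - t' _ b\<bar>"] expectation_abs_diff_eq_d_l1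
        intro!: sum.cong)
  also have "\<dots> = real s * (\<Sum>j<q. d_l1 \<eta> (t j) (t' j))"
    by (simp add: sum.cartesian_product[symmetric])
  finally show ?thesis unfolding PA_def .
qed

lemma tv_dist_D_sim_coupling:
  fixes \<eta> :: "'a::finite pmf" and \<pi> :: "(('a \<Rightarrow> real) \<times> ('a \<Rightarrow> real)) pmf"
  assumes "finite (set_pmf \<pi>)"
  shows "tv_dist (D_sim s q \<eta> (map_pmf fst \<pi>)) (D_sim s q \<eta> (map_pmf snd \<pi>))
     \<le> real s * real q * Ep \<pi> (\<lambda>(x, y). d_l1 \<eta> x y)"
proof -
  define PP where "PP = Pi_pmf {..<q} (undefined, undefined) (\<lambda>_. \<pi>)"
  have finPP: "finite (set_pmf PP)" unfolding PP_def using assms by (intro finite_set_Pi_pmf) auto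
  have D_sim_eq: "D_sim s q \<eta> (map_pmf f \<pi>) = PP \<bind> (\<lambda>h. Pi_pmf {..<s} undefined (\<lambda>_. \<eta>) \<bind>
      (\<lambda>a. Pi_pmf ({..<s} \<times> {..<q}) False (\<lambda>(i, j). bernoulli_pmf (f (h j) (a i)))))"
    if "f (undefined, undefined) = undefined" for f
  proof -
    have "Pi_pmf {..<q} undefined (\<lambda>_. map_pmf f \<pi>) = map_pmf (\<lambda>h. f \<circ> h) PP"
      unfolding PP_def using that by (intro Pi_pmf_map) auto
    then show ?thesis unfolding D_sim_def by (simp add: bind_map_pmf)
  qed
  have "tv_dist (D_sim s q \<eta> (map_pmf fst \<pi>)) (D_sim s q \<eta> (map_pmf snd \<pi>))
      \<le> Ep PP (\<lambda>h. real s * (\<Sum>j<q. d_l1 \<eta> (fst (h j)) (snd (h j))))"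
    unfolding D_sim_eq[of fst, OF fst_conv] D_sim_eq[of snd, OF snd_conv]
    by (intro tv_dist_bind_pmf_right integrable_measure_pmf_finite[OF finPP] tv_dist_bernoulli_matrices)
  also have "\<dots> = real s * (\<Sum>j<q. Ep \<pi> (\<lambda>(x, y). d_l1 \<eta> x y))"
    unfolding PP_def
    by (auto simp: Bochner_Integration.integral_sum integrable_measure_pmf_finite finite_set_Pi_pmf assms
        expectation_Pi_pmf_component[where F = "\<lambda>p. d_l1 \<eta> (fst p) (snd p)"] case_prod_beta'
        intro!: sum.cong)
  also have "\<dots> = real s * real q * Ep \<pi> (\<lambda>(x, y). d_l1 \<eta> x y)" by simp
  finally show ?thesis .
qed

lemma set_pmf_coupling_subset: "\<pi> \<in> couplings p r \<Longrightarrow> set_pmf \<pi> \<subseteq> set_pmf p \<times> set_pmf r"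
  unfolding couplings_def by force

lemma tv_dist_D_sim_le_d_EM:
  assumes "finite (set_pmf \<Lambda>)" "finite (set_pmf \<Lambda>')"
  shows "tv_dist (D_sim s q \<eta> \<Lambda>) (D_sim s q \<eta> \<Lambda>') \<le> real s * real q * d_EM \<eta> \<Lambda> \<Lambda>'"
proof -
  let ?cost = "\<lambda>\<pi>. Ep \<pi> (\<lambda>(x, y). d_l1 \<eta> x y)"
  have coupling_bound: "tv_dist (D_sim s q \<eta> \<Lambda>) (D_sim s q \<eta> \<Lambda>') \<le> real s * real q * ?cost \<pi>"
    if "\<pi> \<in> couplings \<Lambda> \<Lambda>'" for \<pi>
  proof -
    have "finite (set_pmf \<pi>)"
      using assms by (intro finite_subset[OF set_pmf_coupling_subset[OF that]]) auto
    then show ?thesis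
      using tv_dist_D_sim_coupling[of \<pi> s q \<eta>] that unfolding couplings_def by simp
  qed
  have nonempty: "pair_pmf \<Lambda> \<Lambda>' \<in> couplings \<Lambda> \<Lambda>'"
    unfolding couplings_def by (simp add: map_fst_pair_pmf map_snd_pair_pmf)
  show ?thesis
  proof (cases "real s * real q = 0")
    case True
    then show ?thesis using coupling_bound[OF nonempty] by auto
  next
    case False
    then have pos: "real s * real q > 0" by simp
    have "tv_dist (D_sim s q \<eta> \<Lambda>) (D_sim s q \<eta> \<Lambda>') / (real s * real q) \<le> d_EM \<eta> \<Lambda> \<Lambda>'"
      unfolding d_EM_def using nonempty coupling_bound pos
      by (intro cINF_greatest) (auto simp: divide_le_eq mult.commute)
    then show ?thesis using pos by (simp add: divide_le_eq mult.commute)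
  qed
qed

subsection \<open>Simulating the test distribution from types\<close>

lemma D_sim_weight_type_dist:
  "D_sim s q (weight_dist \<xi>) (type_dist n \<xi>) =
     Pi_pmf {..<s} undefined (\<lambda>_. weight_dist \<xi>) \<bind> (\<lambda>a. uniform_tuples n q \<bind> (\<lambda>js.
       Pi_pmf ({..<s} \<times> {..<q}) False (\<lambda>(i, j). bernoulli_pmf (type_of \<xi> (js j) (a i)))))"
proof -
  have "Pi_pmf {..<q} undefined (\<lambda>_. type_dist n \<xi>)
      = map_pmf (\<lambda>f x. if x \<in> {..<q} then f x else undefined) (Pi_pmf {..<q} (type_of \<xi> 0) (\<lambda>_. type_dist n \<xi>))"
    by (rule Pi_pmf_default_swap[symmetric]) simp
  also have "Pi_pmf {..<q} (type_of \<xi> 0) (\<lambda>_. type_dist n \<xi>) = map_pmf (\<lambda>js. type_of \<xi> \<circ> js) (uniform_tuples n q)"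
    unfolding type_dist_def uniform_tuples_def by (rule Pi_pmf_map) auto
  finally have types: "Pi_pmf {..<q} undefined (\<lambda>_. type_dist n \<xi>)
      = map_pmf (\<lambda>js x. if x \<in> {..<q} then type_of \<xi> (js x) else undefined) (uniform_tuples n q)"
    by (simp add: pmf.map_comp o_def)
  have "D_sim s q (weight_dist \<xi>) (type_dist n \<xi>) = uniform_tuples n q \<bind> (\<lambda>js.
      Pi_pmf {..<s} undefined (\<lambda>_. weight_dist \<xi>) \<bind> (\<lambda>a.
        Pi_pmf ({..<s} \<times> {..<q}) False (\<lambda>(i, j). bernoulli_pmf (type_of \<xi> (js j) (a i)))))"
    unfolding D_sim_def types bind_map_pmf by (intro bind_pmf_cong refl Pi_pmf_cong) auto
  then show ?thesis by (simp add: bind_commute_pmf[of "uniform_tuples n q"])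
qed

lemma map_fst_eq_bind_cond1: "map_pmf fst \<xi> = weight_dist \<xi> \<bind> cond1 \<xi>"
proof -
  have "\<xi> \<bind> (\<lambda>x. cond_pmf \<xi> {y. snd x = snd y}) = \<xi>"
    by (rule bind_cond_pmf_cancel) (auto intro!: arg_cong[where f = "measure _"])
  then have "map_pmf fst \<xi> = map_pmf fst (\<xi> \<bind> (\<lambda>x. cond_pmf \<xi> {y. snd x = snd y}))" by simp
  also have "\<dots> = \<xi> \<bind> (\<lambda>x. cond1 \<xi> (snd x))"
    unfolding map_bind_pmf cond1_def by (simp add: eq_commute)
  also have "\<dots> = weight_dist \<xi> \<bind> cond1 \<xi>" by (simp add: weight_dist_def bind_map_pmf)
  finally show ?thesis .
qed

lemma D_test_detailing:
  assumes "is_detailing n \<mu> \<xi>"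
  shows "D_test n s q \<mu> =
     Pi_pmf {..<s} undefined (\<lambda>_. weight_dist \<xi>) \<bind> (\<lambda>a. uniform_tuples n q \<bind> (\<lambda>js.
       map_pmf (\<lambda>xs (i, k). if i < s \<and> k < q then xs i (js k) else False)
         (Pi_pmf {..<s} undefined (\<lambda>i. cond1 \<xi> (a i)))))"
proof -
  have "\<mu> = weight_dist \<xi> \<bind> cond1 \<xi>"
    using assms map_fst_eq_bind_cond1[of \<xi>] unfolding is_detailing_def by simp
  then have samples: "Pi_pmf {..<s} undefined (\<lambda>_. \<mu>) = Pi_pmf {..<s} undefined (\<lambda>_. weight_dist \<xi>) \<bind>
      (\<lambda>a. Pi_pmf {..<s} undefined (\<lambda>i. cond1 \<xi> (a i)))"
    by (simp add: Pi_pmf_bind[where d' = undefined])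
  have tuples: "Pi_pmf {..<q} undefined (\<lambda>_. pmf_of_set {..<n})
      = map_pmf (\<lambda>f x. if x \<in> {..<q} then f x else undefined) (uniform_tuples n q)"
    unfolding uniform_tuples_def by (rule Pi_pmf_default_swap[symmetric]) simp
  show ?thesis
    unfolding D_test_def samples tuples bind_assoc_pmf bind_map_pmf
    by (intro bind_pmf_cong refl, subst bind_commute_pmf)
      (auto simp: map_pmf_def fun_eq_iff intro!: bind_pmf_cong arg_cong[where f = return_pmf])
qed

lemma tv_dist_matrix_by_rows:
  fixes s q :: nat and js :: "nat \<Rightarrow> 'b"
  shows "tv_dist (Pi_pmf ({..<s} \<times> {..<q}) False (\<lambda>(i, j). P i j))
      (map_pmf (\<lambda>xs (i, k). if i < s \<and> k < q then xs i (js k) else False) (Pi_pmf {..<s} d X))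
   \<le> (\<Sum>i<s. tv_dist (Pi_pmf {..<q} False (P i)) (map_pmf (\<lambda>x l. if l < q then x (js l) else False) (X i)))"
proof -
  define row where "row x l = (if l < q then x (js l) else False)" for x :: "'b \<Rightarrow> bool" and l
  define flat where "flat R = (\<lambda>(i, j). if i \<in> {..<s} \<and> j \<in> {..<q} then R i j else False)"
    for R :: "nat \<Rightarrow> nat \<Rightarrow> bool"
  have sim_rows: "Pi_pmf ({..<s} \<times> {..<q}) False (\<lambda>(i, j). P i j)
      = map_pmf flat (Pi_pmf {..<s} (row d) (\<lambda>i. Pi_pmf {..<q} False (P i)))"
    unfolding flat_def by (rule Pi_pmf_Times) auto
  have sample_rows: "map_pmf (\<lambda>xs (i, k). if i < s \<and> k < q then xs i (js k) else False) (Pi_pmf {..<s} d X)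
      = map_pmf flat (Pi_pmf {..<s} (row d) (\<lambda>i. map_pmf row (X i)))"
  proof -
    have "(\<lambda>xs (i, k). if i < s \<and> k < q then xs i (js k) else False) = flat \<circ> (\<lambda>xs. row \<circ> xs)"
      by (auto simp: flat_def row_def fun_eq_iff)
    then show ?thesis by (subst Pi_pmf_map[of _ row d]) (auto simp: pmf.map_comp)
  qed
  have "tv_dist (Pi_pmf {..<s} (row d) (\<lambda>i. Pi_pmf {..<q} False (P i)))
      (Pi_pmf {..<s} (row d) (\<lambda>i. map_pmf row (X i)))
      \<le> (\<Sum>i<s. tv_dist (Pi_pmf {..<q} False (P i)) (map_pmf row (X i)))"
    by (rule tv_dist_Pi_pmf) simp
  then show ?thesis
    unfolding sim_rows sample_rows row_def by (rule order.trans[OF tv_dist_map_pmf])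
qed

lemma tv_dist_eps_independent_row:
  assumes "b \<in> set_pmf (weight_dist \<xi>)" "eps_independent e q (cond1 \<xi> b) js"
  shows "tv_dist (Pi_pmf {..<q} False (\<lambda>l. bernoulli_pmf (type_of \<xi> (js l) b)))
                 (map_pmf (\<lambda>x l. if l < q then x (js l) else False) (cond1 \<xi> b)) \<le> e"
proof -
  have "pmf (weight_dist \<xi>) b > 0" using assms(1) by (simp add: pmf_positive)
  then have "map_pmf (\<lambda>x. x (js l)) (cond1 \<xi> b) = bernoulli_pmf (type_of \<xi> (js l) b)" for l
    using bernoulli_pmf_prob_True[of "map_pmf (\<lambda>x. x (js l)) (cond1 \<xi> b)"]
    by (simp add: type_of_def vimage_def)
  then show ?thesis
    using assms(2) unfolding eps_independent_def by (simp add: tv_dist_commute)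
qed

definition row_error ::
  "real \<Rightarrow> nat \<Rightarrow> nat \<Rightarrow> ((nat \<Rightarrow> bool) \<times> 'a) pmf \<Rightarrow> 'a set \<Rightarrow> 'a \<Rightarrow> (nat \<Rightarrow> nat) \<Rightarrow> real" where
  "row_error e n q \<xi> J b js = (if b \<in> J
    then indicator {js \<in> distinct_tuples n q. \<not> eps_independent e q (cond1 \<xi> b) js} js + e else 1)"

lemma tv_dist_row_le_row_error:
  assumes "b \<in> set_pmf (weight_dist \<xi>)" "js \<in> distinct_tuples n q" "0 \<le> e"
  shows "tv_dist (Pi_pmf {..<q} False (\<lambda>l. bernoulli_pmf (type_of \<xi> (js l) b)))
      (map_pmf (\<lambda>x l. if l < q then x (js l) else False) (cond1 \<xi> b)) \<le> row_error e n q \<xi> J b js"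
proof (cases "b \<in> J \<and> eps_independent e q (cond1 \<xi> b) js")
  case True
  then show ?thesis
    using tv_dist_eps_independent_row[OF assms(1)] by (simp add: row_error_def)
next
  case False
  then have "1 \<le> row_error e n q \<xi> J b js"
    using assms(2,3) by (auto simp: row_error_def)
  then show ?thesis using tv_dist_le_1 order.trans by blast
qed

lemma tv_dist_types_samples_given_tuple:
  fixes s q n :: nat and \<xi> :: "((nat \<Rightarrow> bool) \<times> 'a) pmf"
  assumes "n > 0" "0 \<le> e" "js \<in> set_pmf (uniform_tuples n q)"
    and "\<And>i. i < s \<Longrightarrow> a i \<in> set_pmf (weight_dist \<xi>)"
  shows "tv_dist (Pi_pmf ({..<s} \<times> {..<q}) False (\<lambda>(i, j). bernoulli_pmf (type_of \<xi> (js j) (a i))))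
      (map_pmf (\<lambda>xs (i, k). if i < s \<and> k < q then xs i (js k) else False) (Pi_pmf {..<s} undefined (\<lambda>i. cond1 \<xi> (a i))))
    \<le> indicator {js. \<not> inj_on js {..<q}} js + (\<Sum>i<s. row_error e n q \<xi> J (a i) js)"
proof (cases "inj_on js {..<q}")
  case False
  have "0 \<le> row_error e n q \<xi> J b js" for b
    using assms(2) by (simp add: row_error_def)
  then have "0 \<le> (\<Sum>i<s. row_error e n q \<xi> J (a i) js)"
    by (intro sum_nonneg)
  with False show ?thesis
    by (intro order.trans[OF tv_dist_le_1]) simp
next
  case True
  then have "js \<in> distinct_tuples n q"
    using assms(1,3) by (auto simp: set_pmf_uniform_tuples PiE_dflt_def distinct_tuples_def)
  then have "tv_dist (Pi_pmf ({..<s} \<times> {..<q}) False (\<lambda>(i, j). bernoulli_pmf (type_of \<xi> (js j) (a i))))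
      (map_pmf (\<lambda>xs (i, k). if i < s \<and> k < q then xs i (js k) else False) (Pi_pmf {..<s} undefined (\<lambda>i. cond1 \<xi> (a i))))
    \<le> (\<Sum>i<s. row_error e n q \<xi> J (a i) js)"
    using assms(2,4)
    by (intro order.trans[OF tv_dist_matrix_by_rows[where P = "\<lambda>i j. bernoulli_pmf (type_of \<xi> (js j) (a i))"]
          sum_mono[OF tv_dist_row_le_row_error]]) auto
  then show ?thesis using True by simp
qed

lemma expectation_row_error_le:
  assumes "n > 0" "0 \<le> e" "\<And>b. b \<in> J \<Longrightarrow> good_dist n e q (cond1 \<xi> b)"
  shows "Ep (uniform_tuples n q) (row_error e n q \<xi> J b) \<le> indicator (-J) b + 2 * e"
proof (cases "b \<in> J")
  case True
  define D where "D = distinct_tuples n q"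
  define G where "G = {js \<in> D. eps_independent e q (cond1 \<xi> b) js}"
  have "Pr (uniform_tuples n q) (D - G) \<le> e"
    unfolding uniform_tuples_eq_pmf_of_set[OF assms(1)]
  proof (rule prob_pmf_of_set_Diff_le[OF _ _ _ _ _ assms(2)])
    show "(1 - e) * real (card D) \<le> real (card G)"
      using assms(3)[OF True] unfolding good_dist_def G_def D_def .
    show "finite (PiE_dflt {..<q} 0 (\<lambda>_. {..<n}))" by auto
  qed (use assms(1) in \<open>auto simp: D_def G_def distinct_tuples_def PiE_dflt_def\<close>)
  moreover have "D - G = {js \<in> distinct_tuples n q. \<not> eps_independent e q (cond1 \<xi> b) js}"
    unfolding D_def G_def by auto
  moreover have "finite (set_pmf (uniform_tuples n q))"
    using assms(1) by (auto simp: set_pmf_uniform_tuples)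
  ultimately show ?thesis
    unfolding row_error_def using True
    by (simp add: Bochner_Integration.integral_add integrable_measure_pmf_finite)
qed (unfold row_error_def, use assms(2) in simp)

lemma tv_dist_types_samples_given_weights:
  fixes s q n :: nat and \<xi> :: "((nat \<Rightarrow> bool) \<times> 'a) pmf"
  assumes "n > 0" "0 \<le> e" "\<And>b. b \<in> J \<Longrightarrow> good_dist n e q (cond1 \<xi> b)"
    and "\<And>i. i < s \<Longrightarrow> a i \<in> set_pmf (weight_dist \<xi>)"
  shows "tv_dist
      (uniform_tuples n q \<bind> (\<lambda>js. Pi_pmf ({..<s} \<times> {..<q}) False (\<lambda>(i, j). bernoulli_pmf (type_of \<xi> (js j) (a i)))))
      (uniform_tuples n q \<bind> (\<lambda>js. map_pmf (\<lambda>xs (i, k). if i < s \<and> k < q then xs i (js k) else False)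
         (Pi_pmf {..<s} undefined (\<lambda>i. cond1 \<xi> (a i)))))
    \<le> real q ^ 2 / real n + (\<Sum>i<s. indicator (-J) (a i) + 2 * e)"
proof -
  let ?U = "uniform_tuples n q" and ?N = "{js. \<not> inj_on js {..<q}}"
  have finU: "finite (set_pmf ?U)"
    using assms(1) by (auto simp: set_pmf_uniform_tuples)
  have "tv_dist
      (?U \<bind> (\<lambda>js. Pi_pmf ({..<s} \<times> {..<q}) False (\<lambda>(i, j). bernoulli_pmf (type_of \<xi> (js j) (a i)))))
      (?U \<bind> (\<lambda>js. map_pmf (\<lambda>xs (i, k). if i < s \<and> k < q then xs i (js k) else False)
         (Pi_pmf {..<s} undefined (\<lambda>i. cond1 \<xi> (a i)))))
    \<le> Ep ?U (\<lambda>js. indicator ?N js + (\<Sum>i<s. row_error e n q \<xi> J (a i) js))"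
    using assms
    by (intro tv_dist_bind_pmf_right integrable_measure_pmf_finite[OF finU] tv_dist_types_samples_given_tuple)
  also have "\<dots> = Pr ?U ?N + (\<Sum>i<s. Ep ?U (row_error e n q \<xi> J (a i)))"
    by (simp add: Bochner_Integration.integral_add Bochner_Integration.integral_sum
        integrable_measure_pmf_finite[OF finU])
  also have "\<dots> \<le> real q ^ 2 / real n + (\<Sum>i<s. indicator (-J) (a i) + 2 * e)"
    using prob_uniform_tuples_not_inj_le[OF assms(1)] expectation_row_error_le[OF assms(1-3)]
    by (intro add_mono sum_mono) auto
  finally show ?thesis .
qed
lemma tv_dist_D_sim_types_D_test:
  fixes \<xi> :: "((nat \<Rightarrow> bool) \<times> 'a::finite) pmf"
  assumes "is_detailing n \<mu> \<xi>" "n > 0" "0 \<le> e" "good_detailing n e q \<xi>"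
  shows "tv_dist (D_sim s q (weight_dist \<xi>) (type_dist n \<xi>)) (D_test n s q \<mu>)
    \<le> real q ^ 2 / real n + 3 * real s * e"
proof -
  define \<eta> where "\<eta> = weight_dist \<xi>"
  define PA where "PA = Pi_pmf {..<s} undefined (\<lambda>_. \<eta>)"
  obtain J where J: "Pr \<eta> J \<ge> 1 - e" "\<And>b. b \<in> J \<Longrightarrow> good_dist n e q (cond1 \<xi> b)"
    using assms(4) unfolding good_detailing_def \<eta>_def by blast
  have finPA: "finite (set_pmf PA)" unfolding PA_def by (intro finite_set_Pi_pmf) auto
  have "tv_dist (D_sim s q \<eta> (type_dist n \<xi>)) (D_test n s q \<mu>)
      \<le> Ep PA (\<lambda>a. real q ^ 2 / real n + (\<Sum>i<s. indicator (-J) (a i) + 2 * e))"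
    unfolding PA_def \<eta>_def D_sim_weight_type_dist D_test_detailing[OF assms(1)]
  proof (rule tv_dist_bind_pmf_right[OF _ integrable_measure_pmf_finite[OF finPA[unfolded PA_def \<eta>_def]]],
      goal_cases)
    case (1 a)
    then have "a i \<in> set_pmf (weight_dist \<xi>)" if "i < s" for i
      using that by (auto simp: set_Pi_pmf PiE_dflt_def)
    then show ?case
      by (intro tv_dist_types_samples_given_weights assms(2,3) J(2)) auto
  qed
  also have "\<dots> = real q ^ 2 / real n + real s * (Pr \<eta> (-J) + 2 * e)"
    unfolding PA_def
    by (simp add: Bochner_Integration.integral_add Bochner_Integration.integral_sum
        integrable_measure_pmf_finite finite_set_Pi_pmf expectation_Pi_pmf_component[where F = "indicator (-J)"])
  also have "\<dots> \<le> real q ^ 2 / real n + 3 * real s * e"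
  proof -
    have "Pr \<eta> (-J) \<le> e"
      using J(1) measure_pmf.prob_compl[of J \<eta>] by (simp add: Compl_eq_Diff_UNIV)
    from mult_left_mono[OF this, of "real s"] show ?thesis by (simp add: algebra_simps)
  qed
  finally show ?thesis unfolding \<eta>_def .
qed

theorem lemma4p4:
  fixes s q n :: nat and \<epsilon> :: real
    and \<mu> :: "(nat \<Rightarrow> bool) pmf" and \<xi> :: "((nat \<Rightarrow> bool) \<times> 'a::finite) pmf"
    and \<eta>' :: "'a pmf" and \<Lambda>' :: "('a \<Rightarrow> real) pmf"
  assumes "0 < s" "0 < q" "0 < \<epsilon>" "\<epsilon> < 1"
    and "is_detailing n \<mu> \<xi>"
    and "finite (set_pmf \<Lambda>')" "\<forall>t\<in>set_pmf \<Lambda>'. \<forall>a. 0 \<le> t a \<and> t a \<le> 1"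
    and "d_EM (weight_dist \<xi>) (type_dist n \<xi>) \<Lambda>' \<le> \<epsilon> / (3 * s * q)"
    and "tv_dist (weight_dist \<xi>) \<eta>' \<le> \<epsilon> / (3 * s)"
    and "real n \<ge> 18 * q^2 * (s + 1) / \<epsilon>"
    and "good_detailing n (\<epsilon> / (9 * (s + 1))) q \<xi>"
  shows "tv_dist (D_sim s q \<eta>' \<Lambda>') (D_test n s q \<mu>) \<le> \<epsilon>
    \<and> (\<forall>\<alpha> :: (nat \<times> nat \<Rightarrow> bool) \<Rightarrow> real. (\<forall>M. 0 \<le> \<alpha> M \<and> \<alpha> M \<le> 1) \<longrightarrow>
        \<bar>measure_pmf.expectation (D_sim s q \<eta>' \<Lambda>') \<alpha>
          - measure_pmf.expectation (D_test n s q \<mu>) \<alpha>\<bar> \<le> \<epsilon>)"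
proof -
  define \<eta> where "\<eta> = weight_dist \<xi>"
  define \<Lambda> where "\<Lambda> = type_dist n \<xi>"
  have bound: "18 * real q ^ 2 * (real s + 1) \<le> real n * \<epsilon>"
    using assms(3,10) by (simp add: divide_le_eq algebra_simps)
  then have "n > 0"
    using assms(2) by (intro gr0I) (simp add: mult_le_0_iff)
  with bound have collisions: "real q ^ 2 / real n \<le> \<epsilon> / (18 * (real s + 1))"
    by (simp add: field_simps)
  have weights: "tv_dist (D_sim s q \<eta>' \<Lambda>') (D_sim s q \<eta> \<Lambda>') \<le> \<epsilon> / 3"
    using tv_dist_D_sim_weights[of s q \<eta>' \<Lambda>' \<eta>] assms(1,9) tv_dist_commute[of \<eta>']
    by (simp add: \<eta>_def field_simps)
  have "finite (set_pmf \<Lambda>)"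
    using \<open>n > 0\<close> by (simp add: \<Lambda>_def type_dist_def lessThan_empty_iff)
  then have types: "tv_dist (D_sim s q \<eta> \<Lambda>') (D_sim s q \<eta> \<Lambda>) \<le> \<epsilon> / 3"
    using tv_dist_D_sim_le_d_EM[of \<Lambda> \<Lambda>' s q \<eta>] assms(1,2,6,8) tv_dist_commute[of "D_sim s q \<eta> \<Lambda>'"]
    by (simp add: \<eta>_def \<Lambda>_def field_simps)
  have "tv_dist (D_sim s q \<eta> \<Lambda>) (D_test n s q \<mu>) \<le> real q ^ 2 / real n + 3 * real s * (\<epsilon> / (9 * (real s + 1)))"
    unfolding \<eta>_def \<Lambda>_def using assms(3,5,11) \<open>n > 0\<close>
    by (intro tv_dist_D_sim_types_D_test) (simp_all add: algebra_simps)
  also have "\<dots> \<le> \<epsilon> / 3"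
  proof -
    have "\<epsilon> / (18 * u) + 3 * (u - 1) * (\<epsilon> / (9 * u)) = \<epsilon> / 3 - 5 * \<epsilon> / (18 * u)" if "u > 0" for u
      using that by (simp add: field_simps)
    from this[of "real s + 1"] assms(3)
    have "\<epsilon> / (18 * (real s + 1)) + 3 * real s * (\<epsilon> / (9 * (real s + 1))) \<le> \<epsilon> / 3" by simp
    with collisions show ?thesis by linarith
  qed
  finally have tv: "tv_dist (D_sim s q \<eta>' \<Lambda>') (D_test n s q \<mu>) \<le> \<epsilon>"
    using weights types tv_dist_triangle[of "D_sim s q \<eta>' \<Lambda>'" "D_test n s q \<mu>" "D_sim s q \<eta> \<Lambda>'"]
      tv_dist_triangle[of "D_sim s q \<eta> \<Lambda>'" "D_test n s q \<mu>" "D_sim s q \<eta> \<Lambda>"] by linarith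
  moreover have "\<bar>Ep (D_sim s q \<eta>' \<Lambda>') \<alpha> - Ep (D_test n s q \<mu>) \<alpha>\<bar> \<le> \<epsilon>"
    if "\<forall>M. 0 \<le> \<alpha> M \<and> \<alpha> M \<le> 1" for \<alpha> :: "(nat \<times> nat \<Rightarrow> bool) \<Rightarrow> real"
    using abs_expectation_diff_le_tv_dist[of \<alpha>] that tv by (meson order.trans)
  ultimately show ?thesis by blast
qed

end
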